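(* Let $G$ be a profinite group and let $\psi$ be an expansion map for $G$ with support $A$ and pointer $\chi_0$. Then for all $\sigma_1,\dots,\sigma_{\#A}\in G$, $$\phi_{A\setminus\{\chi_0\}}(\psi)\big([\sigma_1,[\sigma_2,[\dots,[\sigma_{\#A-1},\sigma_{\#A}]\dots]]]\big)=\sum_{f}\prod_{s=1}^{\#A}f(s)(\sigma_s),$$ where the sum runs over all bijections $f:\{1,\dots,\#A\}\to A$ with $f(\#A-1)=\chi_0$ or $f(\#A)=\chi_0$.
   Context: Let $A$ be a finite $\mathbb{F}_2$-linearly independent set of continuous homomorphisms $G\to\mathbb{F}_2$ with $\#A\geq2$, and $\chi_0\in A$. Let $W=\mathbb{F}_2^{A\setminus\{\chi_0\}}$ with basis $(e_\chi)_{\chi\in A\setminus\{\chi_0\}}$, and let $W$ act on the group algebra $\mathbb{F}_2[W]$ by multiplication by group elements, forming $\mathbb{F}_2[W]\rtimes W$. An expansion map for $G$ with support $A$ and pointer $\chi_0$ is a continuous homomorphism $\psi:G\to\mathbb{F}_2[W]\rtimes W$ such that for each $\chi\in A\setminus\{\chi_0\}$ the $\chi$-coordinate of the $W$-component of $\psi$ equals $\chi$, and $\varepsilon\circ(\text{first component of }\psi)=\chi_0$, where $\varepsilon$ is the augmentation of $\mathbb{F}_2[W]$ (this composite is the unique nontrivial character of $\mathbb{F}_2[W]\rtimes W$ trivial on $\{0\}\rtimes W$). Writing $t_\chi=1+[e_\chi]\in\mathbb{F}_2[W]$ and $t_B=\prod_{\chi\in B}t_\chi$ for $B\subseteq A\setminus\{\chi_0\}$,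 the $t_B$ form a basis of $\mathbb{F}_2[W]$, and $\phi_B(\psi):G\to\mathbb{F}_2$ denotes the coefficient of $t_B$ in the first component of $\psi$. Commutators are $[a,b]=aba^{-1}b^{-1}$. *)

theory Defs
  imports "HOL-Analysis.Analysis" "HOL-Algebra.Group" "HOL-Library.Z2" "HOL-Library.FuncSet"
begin

text \<open>F_2 is the field type bit.  G is a group in the HOL-Algebra sense together with a
topology T on its carrier.\<close>

definition profinite_group :: "('g, 'b) monoid_scheme \<Rightarrow> 'g topology \<Rightarrow> bool" where
  "profinite_group G T \<longleftrightarrow> group G \<and> topspace T = carrier G
     \<and> continuous_map (prod_topology T T) T (\<lambda>(x, y). x \<otimes>\<^bsub>G\<^esub> y)
     \<and> continuous_map T T (\<lambda>x. inv\<^bsub>G\<^esub> x)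
     \<and> compact_space T \<and> Hausdorff_space T
     \<and> (\<forall>x \<in> topspace T. connected_component_of_set T x = {x})"

definition cont_char :: "('g, 'b) monoid_scheme \<Rightarrow> 'g topology \<Rightarrow> ('g \<Rightarrow> bit) \<Rightarrow> bool" where
  "cont_char G T chi \<longleftrightarrow> (\<forall>x \<in> carrier G. \<forall>y \<in> carrier G. chi (x \<otimes>\<^bsub>G\<^esub> y) = chi x + chi y)
     \<and> continuous_map T (discrete_topology (UNIV :: bit set)) chi"

text \<open>F_2-linear independence of a finite set of functions on carrier G: no nonempty
subfamily sums to the zero function on G (over F_2 linear combinations are subset sums).\<close>
definition F2_lin_indep :: "('g, 'b) monoid_scheme \<Rightarrow> ('g \<Rightarrow> bit) set \<Rightarrow> bool" where
  "F2_lin_indep G A \<longleftrightarrow> (\<forall>B \<subseteq> A. B \<noteq> {} \<longrightarrow> (\<exists>x \<in> carrier G. (\<Sum>chi\<in>B. chi x) \<noteq> 0))"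

text \<open>W = F_2^S, S = A - {chi_0}, as functions S -> F_2 extended by 0.\<close>
type_synonym 'c vecW = "'c \<Rightarrow> bit"
type_synonym 'c grpalg = "'c vecW \<Rightarrow> bit"

definition Wset :: "'c set \<Rightarrow> 'c vecW set" where
  "Wset S = {w. \<forall>c. c \<notin> S \<longrightarrow> w c = 0}"

definition Wadd :: "'c vecW \<Rightarrow> 'c vecW \<Rightarrow> 'c vecW" where
  "Wadd v w = (\<lambda>c. v c + w c)"

definition Wneg :: "'c vecW \<Rightarrow> 'c vecW" where
  "Wneg v = (\<lambda>c. - v c)"

definition basis_e :: "'c \<Rightarrow> 'c vecW" where
  "basis_e c = (\<lambda>c'. if c' = c then 1 else 0)"

text \<open>Group algebra F_2[W]: functions W -> F_2 vanishing outside W.\<close>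
definition GA :: "'c set \<Rightarrow> 'c grpalg set" where
  "GA S = {p. \<forall>v. v \<notin> Wset S \<longrightarrow> p v = 0}"

definition delta :: "'c vecW \<Rightarrow> 'c grpalg" where
  "delta w = (\<lambda>v. if v = w then 1 else 0)"

definition GAadd :: "'c grpalg \<Rightarrow> 'c grpalg \<Rightarrow> 'c grpalg" where
  "GAadd p q = (\<lambda>v. p v + q v)"

definition GAmul :: "'c set \<Rightarrow> 'c grpalg \<Rightarrow> 'c grpalg \<Rightarrow> 'c grpalg" where
  "GAmul S p q = (\<lambda>v. if v \<in> Wset S then (\<Sum>w\<in>Wset S. p w * q (Wadd v (Wneg w))) else 0)"

definition augm :: "'c set \<Rightarrow> 'c grpalg \<Rightarrow> bit" where
  "augm S p = (\<Sum>w\<in>Wset S. p w)"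

text \<open>The semidirect product F_2[W] \<rtimes> W, W acting by multiplication by group elements.\<close>
definition semidir :: "'c set \<Rightarrow> ('c grpalg \<times> 'c vecW) monoid" where
  "semidir S = \<lparr> carrier = GA S \<times> Wset S,
     mult = (\<lambda>(p, w) (q, v). (GAadd p (GAmul S (delta w) q), Wadd w v)),
     one = (\<lambda>_. 0, \<lambda>_. 0) \<rparr>"

definition t_chi :: "'c set \<Rightarrow> 'c \<Rightarrow> 'c grpalg" where
  "t_chi S c = GAadd (delta (\<lambda>_. 0)) (delta (basis_e c))"

definition t_B :: "'c set \<Rightarrow> 'c set \<Rightarrow> 'c grpalg" where
  "t_B S B = Finite_Set.fold (\<lambda>c acc. GAmul S (t_chi S c) acc) (delta (\<lambda>_. 0)) B"

definition coeff_t :: "'c set \<Rightarrow> 'c grpalg \<Rightarrow> 'c set \<Rightarrow> bit" where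
  "coeff_t S p B = (THE c. (\<forall>B'. \<not> B' \<subseteq> S \<longrightarrow> c B' = 0)
                          \<and> p = (\<lambda>v. \<Sum>B'\<in>Pow S. c B' * t_B S B' v)) B"

definition expansion_map ::
  "('g, 'b) monoid_scheme \<Rightarrow> 'g topology \<Rightarrow> ('g \<Rightarrow> bit) set \<Rightarrow> ('g \<Rightarrow> bit)
     \<Rightarrow> ('g \<Rightarrow> ('g \<Rightarrow> bit) grpalg \<times> ('g \<Rightarrow> bit) vecW) \<Rightarrow> bool" where
  "expansion_map G T A chi0 \<psi> \<longleftrightarrow>
     finite A \<and> 2 \<le> card A \<and> chi0 \<in> A \<and> (\<forall>chi\<in>A. cont_char G T chi) \<and> F2_lin_indep G A
     \<and> \<psi> \<in> hom G (semidir (A - {chi0}))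
     \<and> continuous_map T (discrete_topology (carrier (semidir (A - {chi0})))) \<psi>
     \<and> (\<forall>chi \<in> A - {chi0}. \<forall>\<sigma> \<in> carrier G. snd (\<psi> \<sigma>) chi = chi \<sigma>)
     \<and> (\<forall>\<sigma> \<in> carrier G. augm (A - {chi0}) (fst (\<psi> \<sigma>)) = chi0 \<sigma>)"

definition phi :: "('g \<Rightarrow> bit) set \<Rightarrow> ('g \<Rightarrow> bit) set
     \<Rightarrow> ('g \<Rightarrow> ('g \<Rightarrow> bit) grpalg \<times> ('g \<Rightarrow> bit) vecW) \<Rightarrow> 'g \<Rightarrow> bit" where
  "phi S B \<psi> \<sigma> = coeff_t S (fst (\<psi> \<sigma>)) B"

definition commutator :: "('g, 'b) monoid_scheme \<Rightarrow> 'g \<Rightarrow> 'g \<Rightarrow> 'g" where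
  "commutator G a b = a \<otimes>\<^bsub>G\<^esub> b \<otimes>\<^bsub>G\<^esub> inv\<^bsub>G\<^esub> a \<otimes>\<^bsub>G\<^esub> inv\<^bsub>G\<^esub> b"

fun nested_comm :: "('g, 'b) monoid_scheme \<Rightarrow> 'g list \<Rightarrow> 'g" where
  "nested_comm G [] = \<one>\<^bsub>G\<^esub>"
| "nested_comm G [x] = x"
| "nested_comm G (x # y # zs) = commutator G x (nested_comm G (y # zs))"

end

(*
  Write S = A - {chi0} and psi(sigma_s) = (p_s, w_s).  Identifying W with the subsets of S
  via indicators, t_B becomes the indicator of the subcube W_B, so the t_B-coefficient of
  q in F_2[W] is the sum of q over the supersets of B (Moebius inversion over F_2).

  In F_2[W] x| W the commutator of (p, w) and (q, v) is ((1 + [v]) p + (1 + [w]) q, 0), so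
  psi of the nested commutator is the product of the 1 + [w_s], s <= n - 2, applied to
  (1 + [w_n]) p_(n-1) + (1 + [w_(n-1)]) p_n.  Multiplication by 1 + [u] raises the t-degree
  by one with lowest part sum_c u(c) t_c.  Hence the coefficient of t_S in a product of
  #S = n - 1 such factors applied to p is eps(p) times the permanent of (w_j(c)) =
  (c(sigma_j)), and eps(p_k) = chi0(sigma_k).  Expanding the two permanents over bijections
  gives the bijections f with f(n - 1) = chi0, resp. f(n) = chi0.
*)

theory Submission
  imports Defs
begin

(* Keep sums and products of bits in ring form rather than rewriting them to XOR and AND. *)
declare add_bit_eq_xor [simp del] mult_bit_eq_and [simp del]

lemma bit_add_self [simp]: "(x::bit) + x = 0"
  by (cases x) simp_all

subsection \<open>The vector space \<open>W\<close>\<close>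

lemma Wset_eq_indicator: "w \<in> Wset S \<Longrightarrow> w = indicator {c\<in>S. w c = 1}"
  unfolding Wset_def by (auto simp: fun_eq_iff indicator_def)

lemma indicator_in_Wset_iff: "(indicator X :: 'c vecW) \<in> Wset S \<longleftrightarrow> X \<subseteq> S"
  unfolding Wset_def by (auto simp: indicator_def)

lemma Wset_eq_image_indicator: "Wset S = indicator ` Pow S"
  using Wset_eq_indicator by (fastforce simp: indicator_in_Wset_iff)

lemma inj_indicator_bit: "inj (indicator :: 'c set \<Rightarrow> 'c vecW)"
proof (rule injI)
  fix X Y :: "'c set"
  assume "(indicator X :: 'c vecW) = indicator Y"
  then have "x \<in> X \<longleftrightarrow> x \<in> Y" for x
    by (metis indicator_eq_1_iff)
  then show "X = Y"
    by blast
qed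

lemma finite_Wset: "finite S \<Longrightarrow> finite (Wset S)"
  by (simp add: Wset_eq_image_indicator)

lemma zero_in_Wset [simp]: "(\<lambda>_. 0) \<in> Wset S"
  unfolding Wset_def by simp

lemma Wadd_in_Wset: "v \<in> Wset S \<Longrightarrow> w \<in> Wset S \<Longrightarrow> Wadd v w \<in> Wset S"
  unfolding Wset_def Wadd_def by auto

lemma Wadd_assoc: "Wadd (Wadd a b) c = Wadd a (Wadd b c)"
  unfolding Wadd_def by (simp add: add.assoc)

lemma Wadd_commute: "Wadd a b = Wadd b a"
  unfolding Wadd_def by (simp add: add.commute)

lemma Wadd_self [simp]: "Wadd a a = (\<lambda>_. 0)"
  unfolding Wadd_def by simp

lemma Wadd_zero [simp]: "Wadd a (\<lambda>_. 0) = a"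
  unfolding Wadd_def by simp

lemma Wadd_cancel_right [simp]: "Wadd (Wadd a b) b = a"
  unfolding Wadd_def by (simp add: add.assoc)

lemma Wadd_cancel_left [simp]: "Wadd (Wadd a b) a = b"
  by (metis Wadd_cancel_right Wadd_commute)

lemma Wneg_eq [simp]: "Wneg a = a"
  unfolding Wneg_def by simp

lemma indicator_empty_bit [simp]: "(indicator {} :: 'c vecW) = (\<lambda>_. 0)"
  by (simp add: fun_eq_iff)

lemma basis_e_eq_indicator: "basis_e c = indicator {c}"
  unfolding basis_e_def by (auto simp: indicator_def)

definition toggle :: "'c \<Rightarrow> 'c set \<Rightarrow> 'c set" where
  "toggle c C = (if c \<in> C then C - {c} else insert c C)"

lemma Wadd_indicator_singleton: "Wadd (indicator C) (indicator {c}) = indicator (toggle c C)"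
  unfolding Wadd_def toggle_def by (auto simp: fun_eq_iff indicator_def)

subsection \<open>Multiplication in the group algebra\<close>

text \<open>\<open>GAshift S w q = [w] q\<close> and \<open>GAdiff S u r = (1 + [u]) r\<close> in \<open>\<bbbF>\<^sub>2[W]\<close>.\<close>

definition GAshift :: "'c set \<Rightarrow> 'c vecW \<Rightarrow> 'c grpalg \<Rightarrow> 'c grpalg" where
  "GAshift S w q = (\<lambda>v. if v \<in> Wset S then q (Wadd v w) else 0)"

definition GAdiff :: "'c set \<Rightarrow> 'c vecW \<Rightarrow> 'c grpalg \<Rightarrow> 'c grpalg" where
  "GAdiff S u r = (\<lambda>v. if v \<in> Wset S then r v + r (Wadd v u) else 0)"

lemma GAmul_delta:
  assumes "finite S" "w \<in> Wset S"
  shows "GAmul S (delta w) q = GAshift S w q"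
proof -
  have "(\<Sum>w'\<in>Wset S. delta w w' * q (Wadd v (Wneg w'))) = q (Wadd v w)" for v
  proof -
    have "(\<Sum>w'\<in>Wset S. delta w w' * q (Wadd v (Wneg w'))) =
          (\<Sum>w'\<in>Wset S. if w' = w then q (Wadd v w') else 0)"
      by (rule sum.cong) (auto simp: delta_def)
    also have "\<dots> = q (Wadd v w)"
      using assms by (simp add: finite_Wset)
    finally show ?thesis .
  qed
  then show ?thesis
    unfolding GAmul_def GAshift_def by auto
qed

lemma GAmul_GAadd_left: "GAmul S (GAadd a b) q = GAadd (GAmul S a q) (GAmul S b q)"
  unfolding GAmul_def GAadd_def by (auto simp: fun_eq_iff distrib_right sum.distrib)

lemma GAmul_t_chi:
  assumes "finite S" "c \<in> S"
  shows "GAmul S (t_chi S c) q = GAdiff S (basis_e c) q"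
proof -
  have "basis_e c \<in> Wset S"
    using assms by (simp add: basis_e_eq_indicator indicator_in_Wset_iff)
  then show ?thesis
    unfolding t_chi_def GAmul_GAadd_left using assms
    by (auto simp: GAmul_delta GAadd_def GAdiff_def GAshift_def)
qed

lemma GAdiff_commute:
  assumes "u \<in> Wset S" "u' \<in> Wset S"
  shows "GAdiff S u (GAdiff S u' r) = GAdiff S u' (GAdiff S u r)"
proof -
  have "GAdiff S u (GAdiff S u' r) z = GAdiff S u' (GAdiff S u r) z" for z
  proof (cases "z \<in> Wset S")
    case True
    have "Wadd (Wadd z u) u' = Wadd (Wadd z u') u"
      by (metis Wadd_assoc Wadd_commute)
    with True assms show ?thesis
      by (simp add: GAdiff_def Wadd_in_Wset ac_simps)
  qed (simp add: GAdiff_def)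
  then show ?thesis
    by auto
qed

lemma GAdiff_basis_e_indicator_Wset:
  assumes "c \<in> S" "B \<subseteq> S" "c \<notin> B"
  shows "GAdiff S (basis_e c) (indicator (Wset B)) = indicator (Wset (insert c B))"
proof
  fix v
  have "Wset (insert c B) \<subseteq> Wset S"
    using assms by (auto simp: Wset_def)
  moreover have "v \<in> Wset (insert c B) \<longleftrightarrow>
      (v \<in> Wset B \<or> Wadd v (basis_e c) \<in> Wset B) \<and> v \<in> Wset S"
    using assms by (cases "v c") (auto simp: Wset_def Wadd_def basis_e_def)
  moreover have "\<not> (v \<in> Wset B \<and> Wadd v (basis_e c) \<in> Wset B)"
    using assms by (cases "v c") (auto simp: Wset_def Wadd_def basis_e_def)
  ultimately show "GAdiff S (basis_e c) (indicator (Wset B)) v = indicator (Wset (insert c B)) v"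
    unfolding GAdiff_def indicator_def by auto
qed

lemma t_B_eq_indicator:
  assumes "finite S" "B \<subseteq> S"
  shows "t_B S B = indicator (Wset B)"
proof -
  interpret comp_fun_commute_on S "\<lambda>c. GAmul S (t_chi S c)"
  proof
    fix x y assume xy: "x \<in> S" "y \<in> S"
    then have "basis_e x \<in> Wset S" "basis_e y \<in> Wset S"
      by (simp_all add: basis_e_eq_indicator indicator_in_Wset_iff)
    then show "GAmul S (t_chi S y) \<circ> GAmul S (t_chi S x) = GAmul S (t_chi S x) \<circ> GAmul S (t_chi S y)"
      using assms(1) xy by (simp add: GAmul_t_chi fun_eq_iff GAdiff_commute)
  qed
  have "finite B"
    using assms finite_subset by blast
  from this assms(2) show ?thesis
  proof (induction B rule: finite_induct)
    case empty
    then show ?case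
      unfolding t_B_def by (auto simp: delta_def Wset_def fun_eq_iff indicator_def)
  next
    case (insert c B)
    then have "t_B S (insert c B) = GAmul S (t_chi S c) (t_B S B)"
      unfolding t_B_def by (simp add: fold_insert)
    then show ?case
      using insert assms by (simp add: GAmul_t_chi GAdiff_basis_e_indicator_Wset)
  qed
qed

subsection \<open>Coefficients with respect to the basis \<open>t_B\<close>\<close>

definition tcoeff :: "'c set \<Rightarrow> 'c grpalg \<Rightarrow> 'c set \<Rightarrow> bit" where
  "tcoeff S q B = (\<Sum>C\<in>{C\<in>Pow S. B \<subseteq> C}. q (indicator C))"

lemma tcoeff_add: "tcoeff S (\<lambda>z. a z + b z) B = tcoeff S a B + tcoeff S b B"
  unfolding tcoeff_def by (simp add: sum.distrib)

lemma augm_eq_tcoeff_empty: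
  assumes "finite S"
  shows "augm S q = tcoeff S q {}"
proof -
  have "augm S q = (\<Sum>C\<in>Pow S. q (indicator C))"
    unfolding augm_def Wset_eq_image_indicator
    by (rule sum.reindex [unfolded comp_def]) (metis inj_indicator_bit inj_on_subset subset_UNIV)
  then show ?thesis
    unfolding tcoeff_def by (simp add: Pow_def)
qed

lemma card_subsets_between:
  assumes "finite C" "X \<subseteq> C"
  shows "card {B. X \<subseteq> B \<and> B \<subseteq> C} = 2 ^ card (C - X)"
proof -
  have "bij_betw (\<lambda>B. B - X) {B. X \<subseteq> B \<and> B \<subseteq> C} (Pow (C - X))"
    by (rule bij_betw_byWitness [where f'="\<lambda>B. B \<union> X"]) (use assms in auto)
  then show ?thesis
    using assms by (simp add: bij_betw_same_card card_Pow)
qed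

text \<open>Over \<open>\<bbbF>\<^sub>2\<close> the interval \<open>[X, C]\<close> of the subset lattice has even size unless \<open>C = X\<close>.\<close>

lemma sum_supersets_supersets_bit:
  assumes "finite S" "X \<subseteq> S"
  shows "(\<Sum>B\<in>{B\<in>Pow S. X \<subseteq> B}. \<Sum>C\<in>{C\<in>Pow S. B \<subseteq> C}. f C) = (f X :: bit)"
proof -
  have "(\<Sum>B\<in>{B\<in>Pow S. X \<subseteq> B}. \<Sum>C\<in>{C\<in>Pow S. B \<subseteq> C}. f C)
      = (\<Sum>C\<in>Pow S. \<Sum>B\<in>{B. B \<in> {B\<in>Pow S. X \<subseteq> B} \<and> B \<subseteq> C}. f C)"
    by (rule sum.swap_restrict) (use assms(1) in auto)
  also have "\<dots> = (\<Sum>C\<in>Pow S. if C = X then f C else 0)"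
  proof (rule sum.cong [OF refl])
    fix C assume C: "C \<in> Pow S"
    show "(\<Sum>B\<in>{B. B \<in> {B\<in>Pow S. X \<subseteq> B} \<and> B \<subseteq> C}. f C) = (if C = X then f C else 0)"
    proof (cases "X \<subseteq> C")
      case True
      have "finite C"
        using C assms(1) finite_subset by auto
      have "{B. B \<in> {B\<in>Pow S. X \<subseteq> B} \<and> B \<subseteq> C} = {B. X \<subseteq> B \<and> B \<subseteq> C}"
        using C by auto
      then have "(\<Sum>B\<in>{B. B \<in> {B\<in>Pow S. X \<subseteq> B} \<and> B \<subseteq> C}. f C) = of_nat (2 ^ card (C - X)) * f C"
        using card_subsets_between [OF \<open>finite C\<close> True] by simp
      also have "\<dots> = (if C = X then f C else 0)"
      proof -
        have "card (C - X) = 0 \<longleftrightarrow> C = X"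
          using True \<open>finite C\<close> by auto
        then show ?thesis
          by (simp add: of_nat_power)
      qed
      finally show ?thesis .
    next
      case False
      then have "{B. B \<in> {B\<in>Pow S. X \<subseteq> B} \<and> B \<subseteq> C} = {}"
        by auto
      moreover have "C \<noteq> X"
        using False by blast
      ultimately show ?thesis
        by (simp only: sum.empty if_False)
    qed
  qed
  also have "\<dots> = f X"
    using assms by simp
  finally show ?thesis .
qed

lemma sum_t_B_at_indicator:
  assumes "finite S"
  shows "(\<Sum>B\<in>Pow S. c B * t_B S B (indicator X)) = (\<Sum>B\<in>{B\<in>Pow S. X \<subseteq> B}. c B)"
proof -
  have "(\<Sum>B\<in>Pow S. c B * t_B S B (indicator X)) = (\<Sum>B\<in>Pow S. if X \<subseteq> B then c B else 0)"
    using assms by (intro sum.cong) (auto simp: t_B_eq_indicator indicator_in_Wset_iff)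
  also have "\<dots> = (\<Sum>B\<in>{B\<in>Pow S. X \<subseteq> B}. c B)"
    by (rule sum.inter_filter [symmetric]) (use assms in simp)
  finally show ?thesis .
qed

lemma t_B_expansion:
  assumes "finite S" "p \<in> GA S"
  shows "p = (\<lambda>v. \<Sum>B\<in>Pow S. tcoeff S p B * t_B S B v)"
proof
  fix v
  show "p v = (\<Sum>B\<in>Pow S. tcoeff S p B * t_B S B v)"
  proof (cases "v \<in> Wset S")
    case False
    have "t_B S B v = 0" if "B \<in> Pow S" for B
    proof -
      have "v \<notin> Wset B"
        using that False by (auto simp: Wset_def)
      then show ?thesis
        using that assms(1) by (simp add: t_B_eq_indicator)
    qed
    with False assms(2) show ?thesis
      by (simp add: GA_def)
  next
    case True
    then obtain X where X: "X \<subseteq> S" "v = indicator X"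
      unfolding Wset_eq_image_indicator by blast
    have "(\<Sum>B\<in>Pow S. tcoeff S p B * t_B S B v)
        = (\<Sum>B\<in>{B\<in>Pow S. X \<subseteq> B}. \<Sum>C\<in>{C\<in>Pow S. B \<subseteq> C}. p (indicator C))"
      unfolding X(2) tcoeff_def by (rule sum_t_B_at_indicator [OF assms(1)])
    also have "\<dots> = p v"
      unfolding X(2) by (rule sum_supersets_supersets_bit [OF assms(1) X(1)])
    finally show ?thesis
      by (rule sym)
  qed
qed

lemma tcoeff_t_B_expansion:
  assumes "finite S" "D \<subseteq> S"
  shows "tcoeff S (\<lambda>v. \<Sum>B\<in>Pow S. c B * t_B S B v) D = c D"
proof -
  have "tcoeff S (\<lambda>v. \<Sum>B\<in>Pow S. c B * t_B S B v) D
      = (\<Sum>C\<in>{C\<in>Pow S. D \<subseteq> C}. \<Sum>B\<in>{B\<in>Pow S. C \<subseteq> B}. c B)"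
    unfolding tcoeff_def by (rule sum.cong [OF refl], rule sum_t_B_at_indicator [OF assms(1)])
  also have "\<dots> = c D"
    by (rule sum_supersets_supersets_bit [OF assms])
  finally show ?thesis .
qed

lemma coeff_t_eq_tcoeff:
  assumes "finite S" "p \<in> GA S" "B \<subseteq> S"
  shows "coeff_t S p B = tcoeff S p B"
proof -
  let ?c = "\<lambda>B. if B \<subseteq> S then tcoeff S p B else 0"
  have "(THE c. (\<forall>B'. \<not> B' \<subseteq> S \<longrightarrow> c B' = 0)
          \<and> p = (\<lambda>v. \<Sum>B'\<in>Pow S. c B' * t_B S B' v)) = ?c"
  proof (rule the_equality)
    have "(\<lambda>v. \<Sum>B'\<in>Pow S. ?c B' * t_B S B' v) = (\<lambda>v. \<Sum>B'\<in>Pow S. tcoeff S p B' * t_B S B' v)"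
      by (intro ext sum.cong) auto
    then show "(\<forall>B'. \<not> B' \<subseteq> S \<longrightarrow> ?c B' = 0) \<and> p = (\<lambda>v. \<Sum>B'\<in>Pow S. ?c B' * t_B S B' v)"
      using t_B_expansion [OF assms(1,2)] by simp
  next
    fix c
    assume c: "(\<forall>B'. \<not> B' \<subseteq> S \<longrightarrow> c B' = 0) \<and> p = (\<lambda>v. \<Sum>B'\<in>Pow S. c B' * t_B S B' v)"
    show "c = ?c"
    proof
      fix D
      show "c D = ?c D"
        using c tcoeff_t_B_expansion [OF assms(1), of D c] by auto
    qed
  qed
  then show ?thesis
    unfolding coeff_t_def using assms(3) by simp
qed

subsection \<open>Multiplication by \<open>1 + [u]\<close> raises the \<open>t\<close>-degree\<close>

text \<open>That is, \<open>r\<close> lies in the \<open>j\<close>-th power of the augmentation ideal.\<close>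

definition tcoeffs_vanish_below :: "'c set \<Rightarrow> nat \<Rightarrow> 'c grpalg \<Rightarrow> bool" where
  "tcoeffs_vanish_below S j r \<longleftrightarrow> (\<forall>B\<subseteq>S. card B < j \<longrightarrow> tcoeff S r B = 0)"

lemma tcoeff_GAdiff_singleton:
  assumes "finite S" "c \<in> S" "D \<subseteq> S"
  shows "tcoeff S (GAdiff S (indicator {c}) r) D = (if c \<in> D then tcoeff S r (D - {c}) else 0)"
proof -
  let ?P = "{C\<in>Pow S. D \<subseteq> C}"
  have "tcoeff S (GAdiff S (indicator {c}) r) D
      = (\<Sum>C\<in>?P. r (indicator C)) + (\<Sum>C\<in>?P. r (indicator (toggle c C)))"
    unfolding tcoeff_def sum.distrib [symmetric]
    by (rule sum.cong) (auto simp: GAdiff_def indicator_in_Wset_iff Wadd_indicator_singleton)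
  also have "\<dots> = (if c \<in> D then tcoeff S r (D - {c}) else 0)"
  proof (cases "c \<in> D")
    case False
    have "(\<Sum>C\<in>?P. r (indicator (toggle c C))) = (\<Sum>C\<in>?P. r (indicator C))"
      by (rule sum.reindex_bij_witness [where i="toggle c" and j="toggle c"])
        (use False assms in \<open>auto simp: toggle_def split: if_splits\<close>)
    with False show ?thesis
      by simp
  next
    case True
    let ?Q = "{C\<in>Pow S. D - {c} \<subseteq> C \<and> c \<notin> C}"
    have "(\<Sum>C\<in>?P. r (indicator (toggle c C))) = (\<Sum>C\<in>?Q. r (indicator C))"
      by (rule sum.reindex_bij_witness [where i="insert c" and j="\<lambda>C. C - {c}"])
        (use True assms in \<open>auto simp: toggle_def\<close>)
    moreover have "{C\<in>Pow S. D - {c} \<subseteq> C} = ?P \<union> ?Q" "?P \<inter> ?Q = {}"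
      using True by auto
    then have "tcoeff S r (D - {c}) = (\<Sum>C\<in>?P. r (indicator C)) + (\<Sum>C\<in>?Q. r (indicator C))"
      unfolding tcoeff_def using assms(1) by (simp add: sum.union_disjoint)
    ultimately show ?thesis
      using True by simp
  qed
  finally show ?thesis .
qed

lemma tcoeffs_vanish_below_GAdiff_singleton:
  assumes "finite S" "c \<in> S" "tcoeffs_vanish_below S j r"
  shows "tcoeffs_vanish_below S (Suc j) (GAdiff S (indicator {c}) r)"
  unfolding tcoeffs_vanish_below_def
proof (intro allI impI)
  fix B assume B: "B \<subseteq> S" "card B < Suc j"
  show "tcoeff S (GAdiff S (indicator {c}) r) B = 0"
  proof (cases "c \<in> B")
    case True
    have "finite B"
      using B(1) assms(1) finite_subset by blast
    then have "0 < card B"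
      using True by (auto simp: card_gt_0_iff)
    with True B(2) \<open>finite B\<close> have "card (B - {c}) < j"
      by (simp add: card_Diff_singleton)
    with B(1) assms(3) have "tcoeff S r (B - {c}) = 0"
      unfolding tcoeffs_vanish_below_def by blast
    with True B(1) assms(1,2) show ?thesis
      by (simp add: tcoeff_GAdiff_singleton)
  next
    case False
    then show ?thesis
      using B(1) assms by (simp add: tcoeff_GAdiff_singleton)
  qed
qed

text \<open>This is the identity \<open>1 + [u] [e\<^sub>c] = (1 + [u]) + (1 + [e\<^sub>c]) + (1 + [u]) (1 + [e\<^sub>c])\<close>.\<close>

lemma GAdiff_indicator_insert:
  assumes "c \<notin> X" "X \<subseteq> S" "c \<in> S"
  shows "GAdiff S (indicator (insert c X)) r = (\<lambda>z. GAdiff S (indicator X) r z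
      + GAdiff S (indicator {c}) r z + GAdiff S (indicator X) (GAdiff S (indicator {c}) r) z)"
proof
  fix z
  let ?u = "indicator X" and ?e = "indicator {c}"
  have "indicator (insert c X) = Wadd ?u ?e"
    using assms(1) by (simp add: Wadd_indicator_singleton toggle_def)
  moreover have "Wadd z ?u \<in> Wset S" "Wadd z ?e \<in> Wset S" if "z \<in> Wset S"
    using that assms by (simp_all add: Wadd_in_Wset indicator_in_Wset_iff)
  moreover have "Wadd (Wadd z ?e) ?u = Wadd z (Wadd ?u ?e)"
    by (metis Wadd_assoc Wadd_commute)
  moreover have "Wadd (Wadd z ?u) ?e = Wadd z (Wadd ?u ?e)"
    by (rule Wadd_assoc)
  ultimately show "GAdiff S (indicator (insert c X)) r z = GAdiff S ?u r z + GAdiff S ?e r z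
      + GAdiff S ?u (GAdiff S ?e r) z"
    by (cases "z \<in> Wset S") (simp_all add: GAdiff_def ac_simps)
qed

lemma GAdiff_zero [simp]: "GAdiff S (\<lambda>_. 0) r = (\<lambda>_. 0)"
  unfolding GAdiff_def by (simp add: fun_eq_iff)

lemma tcoeffs_vanish_below_GAdiff:
  assumes "finite S" "X \<subseteq> S" "tcoeffs_vanish_below S j r"
  shows "tcoeffs_vanish_below S (Suc j) (GAdiff S (indicator X) r)"
proof -
  have "finite X"
    using assms finite_subset by blast
  from this assms(2,3) show ?thesis
  proof (induction X arbitrary: j r rule: finite_induct)
    case empty
    then show ?case
      by (simp add: tcoeffs_vanish_below_def tcoeff_def)
  next
    case (insert c X)
    have cX: "c \<in> S" "X \<subseteq> S"
      using insert.prems by auto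
    let ?r' = "GAdiff S (indicator {c}) r"
    have r': "tcoeffs_vanish_below S (Suc j) ?r'"
      using assms(1) cX(1) insert.prems(2) by (rule tcoeffs_vanish_below_GAdiff_singleton)
    have "tcoeffs_vanish_below S (Suc j) (GAdiff S (indicator X) r)"
      using cX(2) insert.prems(2) by (rule insert.IH)
    moreover have "tcoeffs_vanish_below S (Suc (Suc j)) (GAdiff S (indicator X) ?r')"
      using cX(2) r' by (rule insert.IH)
    ultimately show ?case
      using r' unfolding tcoeffs_vanish_below_def
      by (simp add: GAdiff_indicator_insert [OF insert.hyps(2) cX(2,1)] tcoeff_add)
  qed
qed

lemma tcoeff_GAdiff_lowest:
  assumes "finite S" "X \<subseteq> S" "tcoeffs_vanish_below S j r" "D \<subseteq> S" "card D = Suc j"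
  shows "tcoeff S (GAdiff S (indicator X) r) D = (\<Sum>c\<in>D. indicator X c * tcoeff S r (D - {c}))"
proof -
  have "finite X" "finite D"
    using assms finite_subset by blast+
  from this(1) assms(2) show ?thesis
  proof (induction X rule: finite_induct)
    case empty
    then show ?case
      by (simp add: tcoeff_def)
  next
    case (insert c X)
    have cX: "c \<in> S" "X \<subseteq> S"
      using insert.prems by auto
    let ?r' = "GAdiff S (indicator {c}) r"
    have "tcoeffs_vanish_below S (Suc (Suc j)) (GAdiff S (indicator X) ?r')"
      using assms(1) cX(2) tcoeffs_vanish_below_GAdiff_singleton [OF assms(1) cX(1) assms(3)]
      by (rule tcoeffs_vanish_below_GAdiff)
    then have "tcoeff S (GAdiff S (indicator X) ?r') D = 0"
      using assms(4,5) unfolding tcoeffs_vanish_below_def by simp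
    then have "tcoeff S (GAdiff S (indicator (insert c X)) r) D
        = tcoeff S (GAdiff S (indicator X) r) D + tcoeff S ?r' D"
      by (simp add: GAdiff_indicator_insert [OF insert.hyps(2) cX(2,1)] tcoeff_add)
    also have "\<dots> = (\<Sum>c'\<in>D. indicator X c' * tcoeff S r (D - {c'}))
        + (\<Sum>c'\<in>D. indicator {c} c' * tcoeff S r (D - {c'}))"
    proof -
      have "(\<Sum>c'\<in>D. indicator {c} c' * tcoeff S r (D - {c'}))
          = (\<Sum>c'\<in>D. if c' = c then tcoeff S r (D - {c'}) else 0)"
        by (rule sum.cong) (simp_all add: indicator_def)
      then have "tcoeff S ?r' D = (\<Sum>c'\<in>D. indicator {c} c' * tcoeff S r (D - {c'}))"
        using \<open>finite D\<close> by (simp add: tcoeff_GAdiff_singleton [OF assms(1) cX(1) assms(4)] sum.delta')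
      then show ?thesis
        by (simp only: insert.IH [OF cX(2)])
    qed
    also have "\<dots> = (\<Sum>c'\<in>D. (indicator X c' + indicator {c} c') * tcoeff S r (D - {c'}))"
      by (simp only: sum.distrib [symmetric] distrib_right)
    also have "\<dots> = (\<Sum>c'\<in>D. indicator (insert c X) c' * tcoeff S r (D - {c'}))"
      using insert.hyps(2) by (intro sum.cong [OF refl]) (auto simp: indicator_def)
    finally show ?case .
  qed
qed

fun permanent :: "('c \<Rightarrow> bit) list \<Rightarrow> 'c set \<Rightarrow> bit" where
  "permanent [] C = (if C = {} then 1 else 0)"
| "permanent (u # us) C = (\<Sum>c\<in>C. u c * permanent us (C - {c}))"

lemma tcoeffs_vanish_below_GAdiff_list:
  assumes "finite S" "set us \<subseteq> Wset S"
  shows "tcoeffs_vanish_below S (length us) (foldr (GAdiff S) us q)"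
  using assms(2)
proof (induction us)
  case Nil
  then show ?case
    by (simp add: tcoeffs_vanish_below_def)
next
  case (Cons u us)
  then obtain X where "X \<subseteq> S" "u = indicator X"
    unfolding Wset_eq_image_indicator by auto
  with Cons assms(1) show ?case
    by (simp add: tcoeffs_vanish_below_GAdiff)
qed

lemma tcoeff_GAdiff_list:
  assumes "finite S" "set us \<subseteq> Wset S" "D \<subseteq> S" "card D = length us"
  shows "tcoeff S (foldr (GAdiff S) us q) D = augm S q * permanent us D"
  using assms(2-4)
proof (induction us arbitrary: D)
  case Nil
  then have "D = {}"
    using assms(1) finite_subset by fastforce
  with assms(1) show ?case
    by (simp add: augm_eq_tcoeff_empty)
next
  case (Cons u us)
  then obtain X where X: "X \<subseteq> S" "u = indicator X"
    unfolding Wset_eq_image_indicator by auto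
  have us: "set us \<subseteq> Wset S"
    using Cons.prems(1) by simp
  have "finite D"
    using Cons.prems assms(1) finite_subset by blast
  have "tcoeff S (foldr (GAdiff S) (u # us) q) D
      = (\<Sum>c\<in>D. u c * tcoeff S (foldr (GAdiff S) us q) (D - {c}))"
    using tcoeff_GAdiff_lowest [OF assms(1) X(1) tcoeffs_vanish_below_GAdiff_list [OF assms(1) us]]
      Cons.prems(2,3) X(2) by simp
  also have "\<dots> = (\<Sum>c\<in>D. u c * (augm S q * permanent us (D - {c})))"
  proof (rule sum.cong [OF refl])
    fix c assume "c \<in> D"
    then have "D - {c} \<subseteq> S" "card (D - {c}) = length us"
      using Cons.prems(2,3) \<open>finite D\<close> by auto
    then show "u c * tcoeff S (foldr (GAdiff S) us q) (D - {c})
        = u c * (augm S q * permanent us (D - {c}))"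
      using Cons.IH [OF us] by simp
  qed
  also have "\<dots> = augm S q * permanent (u # us) D"
    by (simp add: sum_distrib_left ac_simps)
  finally show ?case .
qed

subsection \<open>Sums over bijections\<close>

definition bijections :: "'a set \<Rightarrow> 'b set \<Rightarrow> ('a \<Rightarrow> 'b) set" where
  "bijections I C = {f \<in> I \<rightarrow>\<^sub>E C. bij_betw f I C}"

lemma finite_bijections: "finite I \<Longrightarrow> finite C \<Longrightarrow> finite (bijections I C)"
  unfolding bijections_def by (rule finite_subset [OF _ finite_PiE]) auto

lemma bijections_empty: "bijections {} C = (if C = {} then {\<lambda>_. undefined} else {})"
  unfolding bijections_def by (auto simp: bij_betw_def)

lemma bij_betw_fun_upd_insert_iff:
  assumes "i \<notin> I" "c \<in> C"
  shows "bij_betw (g(i := c)) (insert i I) C \<longleftrightarrow> bij_betw g I (C - {c})"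
proof -
  have "bij_betw (g(i := c)) I (C - {c}) \<longleftrightarrow> bij_betw g I (C - {c})"
    using assms(1) by (intro bij_betw_cong) auto
  then show ?thesis
    using notIn_Un_bij_betw3 [of i I "g(i := c)" "C - {c}"] assms by (simp add: insert_absorb)
qed

lemma bijections_fun_upd:
  assumes "i \<notin> I" "c \<in> C"
  shows "{f \<in> bijections (insert i I) C. f i = c} = (\<lambda>g. g(i := c)) ` bijections I (C - {c})"
proof (intro equalityI subsetI)
  fix f assume f: "f \<in> {f \<in> bijections (insert i I) C. f i = c}"
  then have "inj_on f (insert i I)"
    unfolding bijections_def bij_betw_def by blast
  then have "f j \<noteq> f i" if "j \<in> I" for j
    using that assms(1) by (auto simp: inj_on_def)
  then have "f(i := undefined) \<in> bijections I (C - {c})"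
    using f assms bij_betw_fun_upd_insert_iff [of i I c C "f(i := undefined)"]
    by (auto simp: bijections_def PiE_def extensional_def)
  moreover have "f = (f(i := undefined))(i := c)"
    using f by auto
  ultimately show "f \<in> (\<lambda>g. g(i := c)) ` bijections I (C - {c})"
    by (metis image_eqI)
next
  fix f assume "f \<in> (\<lambda>g. g(i := c)) ` bijections I (C - {c})"
  then obtain g where "g \<in> bijections I (C - {c})" "f = g(i := c)"
    by blast
  then show "f \<in> {f \<in> bijections (insert i I) C. f i = c}"
    using assms bij_betw_fun_upd_insert_iff [of i I c C g]
    by (auto simp: bijections_def PiE_def extensional_def)
qed

lemma inj_on_fun_upd_bijections:
  assumes "i \<notin> I"
  shows "inj_on (\<lambda>g. g(i := c)) (bijections I C)"
proof (rule inj_onI)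
  fix g g' assume "g \<in> bijections I C" "g' \<in> bijections I C" "g(i := c) = g'(i := c)"
  with assms show "g = g'"
    unfolding bijections_def by (metis (mono_tags) PiE_arb fun_upd_idem_iff fun_upd_upd mem_Collect_eq)
qed

lemma sum_bijections_fixing_point:
  fixes h :: "'a \<Rightarrow> 'b \<Rightarrow> 'r::comm_semiring_1"
  assumes "finite I" "i \<notin> I" "c \<in> C"
  shows "(\<Sum>f\<in>{f \<in> bijections (insert i I) C. f i = c}. \<Prod>j\<in>insert i I. h j (f j))
       = h i c * (\<Sum>g\<in>bijections I (C - {c}). \<Prod>j\<in>I. h j (g j))"
proof -
  have "(\<Sum>f\<in>{f \<in> bijections (insert i I) C. f i = c}. \<Prod>j\<in>insert i I. h j (f j))
      = (\<Sum>g\<in>bijections I (C - {c}). \<Prod>j\<in>insert i I. h j ((g(i := c)) j))"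
    unfolding bijections_fun_upd [OF assms(2,3)]
    by (rule sum.reindex [OF inj_on_fun_upd_bijections [OF assms(2)], unfolded comp_def])
  also have "\<dots> = (\<Sum>g\<in>bijections I (C - {c}). h i c * (\<Prod>j\<in>I. h j (g j)))"
  proof (rule sum.cong [OF refl])
    fix g
    have "(\<Prod>j\<in>I. h j ((g(i := c)) j)) = (\<Prod>j\<in>I. h j (g j))"
      using assms(2) by (intro prod.cong [OF refl]) auto
    then show "(\<Prod>j\<in>insert i I. h j ((g(i := c)) j)) = h i c * (\<Prod>j\<in>I. h j (g j))"
      using assms(1,2) by simp
  qed
  finally show ?thesis
    by (simp add: sum_distrib_left)
qed

lemma permanent_eq_sum_bijections:
  assumes "distinct is" "finite C"
  shows "permanent (map u is) C = (\<Sum>f\<in>bijections (set is) C. \<Prod>j\<in>set is. u j (f j))"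
  using assms
proof (induction "is" arbitrary: C)
  case Nil
  then show ?case
    by (simp add: bijections_empty)
next
  case (Cons i "is")
  have "(\<Sum>f\<in>bijections (insert i (set is)) C. \<Prod>j\<in>insert i (set is). u j (f j))
      = (\<Sum>c\<in>C. \<Sum>f\<in>{f \<in> bijections (insert i (set is)) C. f i = c}. \<Prod>j\<in>insert i (set is). u j (f j))"
    using Cons.prems
    by (intro sum.group [symmetric] finite_bijections) (auto simp: bijections_def)
  also have "\<dots> = (\<Sum>c\<in>C. u i c * permanent (map u is) (C - {c}))"
    using Cons by (intro sum.cong [OF refl], subst sum_bijections_fixing_point) simp_all
  finally show ?case
    by simp
qed

subsection \<open>Homomorphisms into the semidirect product\<close>

lemma GAshift_zero: "p \<in> GA S \<Longrightarrow> GAshift S (\<lambda>_. 0) p = p"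
  unfolding GAshift_def GA_def by (auto simp: fun_eq_iff)

lemma GAshift_GAshift: "a \<in> Wset S \<Longrightarrow> GAshift S a (GAshift S b p) = GAshift S (Wadd a b) p"
  unfolding GAshift_def by (auto simp: fun_eq_iff Wadd_in_Wset Wadd_assoc)

lemma GAdiff_add: "GAdiff S u (\<lambda>z. a z + b z) = (\<lambda>z. GAdiff S u a z + GAdiff S u b z)"
  by (auto simp: GAdiff_def fun_eq_iff ac_simps)

lemma foldr_GAdiff_add:
  "foldr (GAdiff S) us (\<lambda>z. a z + b z) = (\<lambda>z. foldr (GAdiff S) us a z + foldr (GAdiff S) us b z)"
  by (induction us) (simp_all add: GAdiff_add)

locale semidir_hom = group G for G :: "('g, 'b) monoid_scheme" (structure) +
  fixes S :: "'c set" and \<psi> :: "'g \<Rightarrow> 'c grpalg \<times> 'c vecW"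
  assumes hom: "\<psi> \<in> hom G (semidir S)" and finite_S: "finite S"
begin

lemma psi_in_carrier:
  assumes "x \<in> carrier G"
  shows "fst (\<psi> x) \<in> GA S" "snd (\<psi> x) \<in> Wset S"
  using hom_in_carrier [OF hom assms] by (auto simp: semidir_def mem_Times_iff)

lemma psi_mult:
  assumes "x \<in> carrier G" "y \<in> carrier G"
  shows "\<psi> (x \<otimes> y) = ((\<lambda>z. fst (\<psi> x) z + GAshift S (snd (\<psi> x)) (fst (\<psi> y)) z),
      Wadd (snd (\<psi> x)) (snd (\<psi> y)))"
  using hom_mult [OF hom assms] psi_in_carrier [OF assms(1)] finite_S
  by (simp add: semidir_def case_prod_beta GAmul_delta GAadd_def)

lemma psi_one: "\<psi> \<one> = (\<lambda>_. 0, \<lambda>_. 0)"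
proof -
  obtain p w where pw: "\<psi> \<one> = (p, w)"
    by fastforce
  then have "p \<in> GA S"
    using psi_in_carrier [OF one_closed] by simp
  have "w = (\<lambda>_. 0)" "p = (\<lambda>z. p z + GAshift S (\<lambda>_. 0) p z)"
    using psi_mult [OF one_closed one_closed] pw by auto
  with pw show ?thesis
    using GAshift_zero [OF \<open>p \<in> GA S\<close>] by simp
qed

lemma psi_inv:
  assumes "x \<in> carrier G"
  shows "\<psi> (inv x) = (GAshift S (snd (\<psi> x)) (fst (\<psi> x)), snd (\<psi> x))"
proof -
  obtain p w where pw: "\<psi> x = (p, w)"
    by fastforce
  obtain p' w' where pw': "\<psi> (inv x) = (p', w')"
    by fastforce
  have "p' \<in> GA S" "w \<in> Wset S"
    using psi_in_carrier assms pw pw' by (metis fst_conv inv_closed, metis snd_conv)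
  have "(\<lambda>_. 0, \<lambda>_. 0) = ((\<lambda>z. p z + GAshift S w p' z), Wadd w w')"
    using psi_mult [OF assms inv_closed [OF assms]] assms psi_one pw pw' by simp
  then have "w' = w" "GAshift S w p' = p"
    by (auto simp: fun_eq_iff Wadd_def add_eq_0_iff)
  then have "GAshift S w p = p'"
    using GAshift_GAshift [OF \<open>w \<in> Wset S\<close>, of w p'] GAshift_zero [OF \<open>p' \<in> GA S\<close>] by simp
  with pw pw' \<open>w' = w\<close> show ?thesis
    by simp
qed

lemma psi_commutator:
  assumes "x \<in> carrier G" "y \<in> carrier G"
  shows "\<psi> (commutator G x y) =
    ((\<lambda>z. GAdiff S (snd (\<psi> y)) (fst (\<psi> x)) z + GAdiff S (snd (\<psi> x)) (fst (\<psi> y)) z), (\<lambda>_. 0))"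
proof -
  obtain p w where pw: "\<psi> x = (p, w)"
    by fastforce
  obtain q v where qv: "\<psi> y = (q, v)"
    by fastforce
  have in_carrier: "p \<in> GA S" "w \<in> Wset S" "q \<in> GA S" "v \<in> Wset S"
    using psi_in_carrier assms pw qv by (metis fst_conv snd_conv)+
  have "\<psi> (x \<otimes> y \<otimes> inv x) = ((\<lambda>z. p z + GAshift S w q z + GAshift S v p z), v)"
    using psi_mult [OF m_closed [OF assms] inv_closed [OF assms(1)]] psi_mult [OF assms]
      psi_inv [OF assms(1)] pw qv in_carrier
    by (simp add: GAshift_GAshift Wadd_in_Wset Wadd_assoc)
  then have "\<psi> (commutator G x y) = ((\<lambda>z. p z + GAshift S w q z + GAshift S v p z + q z), (\<lambda>_. 0))"
    using psi_mult [OF m_closed [OF m_closed [OF assms] inv_closed [OF assms(1)]] inv_closed [OF assms(2)]]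
      psi_inv [OF assms(2)] qv in_carrier
    by (simp add: commutator_def GAshift_GAshift GAshift_zero)
  moreover have "p z + GAshift S w q z + GAshift S v p z + q z = GAdiff S v p z + GAdiff S w q z" for z
    using in_carrier by (cases "z \<in> Wset S") (simp_all add: GAshift_def GAdiff_def GA_def ac_simps)
  ultimately show ?thesis
    using pw qv by simp
qed

lemma nested_comm_closed: "set xs \<subseteq> carrier G \<Longrightarrow> nested_comm G xs \<in> carrier G"
  by (induction xs rule: induct_list012) (simp_all add: commutator_def)

lemma psi_nested_comm:
  assumes "set ys \<subseteq> carrier G" "a \<in> carrier G" "b \<in> carrier G"
  shows "\<psi> (nested_comm G (ys @ [a, b])) =
    (foldr (GAdiff S) (map (\<lambda>y. snd (\<psi> y)) ys)
       (\<lambda>z. GAdiff S (snd (\<psi> b)) (fst (\<psi> a)) z + GAdiff S (snd (\<psi> a)) (fst (\<psi> b)) z),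
     (\<lambda>_. 0))"
  using assms(1)
proof (induction ys)
  case Nil
  then show ?case
    using psi_commutator [OF assms(2,3)] by simp
next
  case (Cons y ys)
  have "nested_comm G ((y # ys) @ [a, b]) = commutator G y (nested_comm G (ys @ [a, b]))"
    by (cases ys) simp_all
  moreover have "nested_comm G (ys @ [a, b]) \<in> carrier G"
    using Cons.prems assms(2,3) by (intro nested_comm_closed) auto
  ultimately show ?case
    using Cons psi_commutator [of y] by (simp add: fun_eq_iff GAdiff_def)
qed

lemma coeff_t_psi_nested_comm:
  assumes "\<sigma> ` {1..n} \<subseteq> carrier G" "2 \<le> n"
  shows "coeff_t S (fst (\<psi> (nested_comm G (map \<sigma> [1..<n + 1])))) S
    = tcoeff S (foldr (GAdiff S) (map (\<lambda>j. snd (\<psi> (\<sigma> j))) ([1..<n - 1] @ [n])) (fst (\<psi> (\<sigma> (n - 1))))) S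
    + tcoeff S (foldr (GAdiff S) (map (\<lambda>j. snd (\<psi> (\<sigma> j))) ([1..<n - 1] @ [n - 1])) (fst (\<psi> (\<sigma> n)))) S"
proof -
  define x where "x = nested_comm G (map \<sigma> [1..<n + 1])"
  obtain m where "n = Suc (Suc m)"
    using assms(2) by (metis add_2_eq_Suc le_Suc_ex)
  then have "[1..<n + 1] = [1..<n - 1] @ [n - 1, n]"
    by simp
  moreover have "set (map \<sigma> [1..<n - 1]) \<subseteq> carrier G" "\<sigma> (n - 1) \<in> carrier G" "\<sigma> n \<in> carrier G"
    using assms by (auto simp: image_subset_iff)
  ultimately have psi_x: "\<psi> x = (foldr (GAdiff S) (map (\<lambda>j. snd (\<psi> (\<sigma> j))) [1..<n - 1])
      (\<lambda>z. GAdiff S (snd (\<psi> (\<sigma> n))) (fst (\<psi> (\<sigma> (n - 1)))) z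
         + GAdiff S (snd (\<psi> (\<sigma> (n - 1)))) (fst (\<psi> (\<sigma> n))) z), \<lambda>_. 0)"
    unfolding x_def using psi_nested_comm by (simp add: comp_def)
  have "x \<in> carrier G"
    unfolding x_def using assms(1) by (intro nested_comm_closed) auto
  then have "coeff_t S (fst (\<psi> x)) S = tcoeff S (fst (\<psi> x)) S"
    using psi_in_carrier finite_S by (simp add: coeff_t_eq_tcoeff)
  also have "\<dots> = tcoeff S (foldr (GAdiff S) (map (\<lambda>j. snd (\<psi> (\<sigma> j))) ([1..<n - 1] @ [n]))
        (fst (\<psi> (\<sigma> (n - 1))))) S
      + tcoeff S (foldr (GAdiff S) (map (\<lambda>j. snd (\<psi> (\<sigma> j))) ([1..<n - 1] @ [n - 1]))
        (fst (\<psi> (\<sigma> n)))) S"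
    unfolding psi_x by (simp add: foldr_GAdiff_add tcoeff_add)
  finally show ?thesis
    unfolding x_def .
qed

end

subsection \<open>Expansion maps\<close>

lemma top_tcoeff_foldr_GAdiff_expansion_map:
  assumes "group G" "expansion_map G T A chi0 \<psi>"
    and "distinct (k # is)" "insert k (set is) = I" "card I = card A" "\<sigma> ` I \<subseteq> carrier G"
  shows "tcoeff (A - {chi0})
      (foldr (GAdiff (A - {chi0})) (map (\<lambda>j. snd (\<psi> (\<sigma> j))) is) (fst (\<psi> (\<sigma> k)))) (A - {chi0})
    = (\<Sum>f\<in>{f \<in> bijections I A. f k = chi0}. \<Prod>s\<in>I. f s (\<sigma> s))"
proof -
  define S where "S = A - {chi0}"
  from assms(2) have "finite A" "chi0 \<in> A" "\<psi> \<in> hom G (semidir S)"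
    and psi_snd: "\<And>chi x. chi \<in> S \<Longrightarrow> x \<in> carrier G \<Longrightarrow> snd (\<psi> x) chi = chi x"
    and psi_augm: "\<And>x. x \<in> carrier G \<Longrightarrow> augm S (fst (\<psi> x)) = chi0 x"
    unfolding expansion_map_def S_def by auto
  then interpret semidir_hom G S \<psi>
    using assms(1) by (simp add: semidir_hom_def semidir_hom_axioms_def S_def)
  have \<sigma>: "\<sigma> j \<in> carrier G" if "j \<in> I" for j
    using that assms(6) by blast
  have "card S = length is"
    using assms(3-5) \<open>finite A\<close> \<open>chi0 \<in> A\<close> by (auto simp: S_def distinct_card)
  moreover have "set (map (\<lambda>j. snd (\<psi> (\<sigma> j))) is) \<subseteq> Wset S"
    using assms(4) \<sigma> psi_in_carrier by auto
  ultimately have "tcoeff S (foldr (GAdiff S) (map (\<lambda>j. snd (\<psi> (\<sigma> j))) is) (fst (\<psi> (\<sigma> k)))) S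
      = augm S (fst (\<psi> (\<sigma> k))) * permanent (map (\<lambda>j. snd (\<psi> (\<sigma> j))) is) S"
    using finite_S by (simp add: tcoeff_GAdiff_list)
  also have "\<dots> = chi0 (\<sigma> k) * (\<Sum>g\<in>bijections (set is) S. \<Prod>j\<in>set is. snd (\<psi> (\<sigma> j)) (g j))"
    using assms(3,4) psi_augm [OF \<sigma> [of k]] finite_S by (auto simp: permanent_eq_sum_bijections)
  also have "\<dots> = chi0 (\<sigma> k) * (\<Sum>g\<in>bijections (set is) S. \<Prod>j\<in>set is. g j (\<sigma> j))"
    using assms(4) \<sigma> psi_snd
    by (intro arg_cong [where f="(*) _"] sum.cong [OF refl] prod.cong [OF refl])
      (auto simp: bijections_def)
  also have "\<dots> = (\<Sum>f\<in>{f \<in> bijections I A. f k = chi0}. \<Prod>s\<in>I. f s (\<sigma> s))"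
    using sum_bijections_fixing_point [of "set is" k chi0 A "\<lambda>s c. c (\<sigma> s)"] assms(3,4) \<open>chi0 \<in> A\<close>
    by (simp add: S_def)
  finally show ?thesis
    by (simp add: S_def)
qed

lemma sum_bijections_either_point:
  assumes "finite I" "finite A" "i \<in> I" "j \<in> I" "i \<noteq> j"
  shows "(\<Sum>f\<in>{f \<in> bijections I A. f i = c}. F f) + (\<Sum>f\<in>{f \<in> bijections I A. f j = c}. F f)
       = (\<Sum>f\<in>{f \<in> I \<rightarrow>\<^sub>E A. bij_betw f I A \<and> (f i = c \<or> f j = c)}. F f)"
proof -
  have "{f \<in> bijections I A. f i = c} \<inter> {f \<in> bijections I A. f j = c} = {}"
    using assms(3-5) by (auto simp: bijections_def bij_betw_def inj_on_def)
  moreover have "{f \<in> bijections I A. f i = c} \<union> {f \<in> bijections I A. f j = c}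
      = {f \<in> I \<rightarrow>\<^sub>E A. bij_betw f I A \<and> (f i = c \<or> f j = c)}"
    by (auto simp: bijections_def)
  ultimately show ?thesis
    using finite_bijections [OF assms(1,2)] by (metis (no_types, lifting) finite_subset mem_Collect_eq subsetI sum.union_disjoint)
qed

theorem lemma3p22:
  fixes G :: "('g, 'b) monoid_scheme" and T :: "'g topology"
    and A :: "('g \<Rightarrow> bit) set" and chi0 :: "'g \<Rightarrow> bit"
    and \<psi> :: "'g \<Rightarrow> ('g \<Rightarrow> bit) grpalg \<times> ('g \<Rightarrow> bit) vecW"
    and \<sigma> :: "nat \<Rightarrow> 'g"
  assumes "profinite_group G T"
    and "expansion_map G T A chi0 \<psi>"
    and "\<forall>s \<in> {1..card A}. \<sigma> s \<in> carrier G"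
  shows "phi (A - {chi0}) (A - {chi0}) \<psi> (nested_comm G (map \<sigma> [1..<card A + 1])) =
    (\<Sum>f \<in> {f \<in> {1..card A} \<rightarrow>\<^sub>E A. bij_betw f {1..card A} A
                 \<and> (f (card A - 1) = chi0 \<or> f (card A) = chi0)}.
        \<Prod>s\<in>{1..card A}. f s (\<sigma> s))"
proof -
  define n where "n = card A"
  from assms(2) have "finite A" "2 \<le> n"
    unfolding expansion_map_def n_def by auto
  have "group G"
    using assms(1) by (simp add: profinite_group_def)
  then interpret semidir_hom G "A - {chi0}" \<psi>
    using assms(2) by (simp add: semidir_hom_def semidir_hom_axioms_def expansion_map_def)
  have \<sigma>: "\<sigma> ` {1..n} \<subseteq> carrier G"
    using assms(3) by (auto simp: n_def)
  have indices: "distinct ((n - 1) # [1..<n - 1] @ [n])" "insert (n - 1) (set ([1..<n - 1] @ [n])) = {1..n}"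
    "distinct (n # [1..<n - 1] @ [n - 1])" "insert n (set ([1..<n - 1] @ [n - 1])) = {1..n}"
    using \<open>2 \<le> n\<close> by auto
  have "phi (A - {chi0}) (A - {chi0}) \<psi> (nested_comm G (map \<sigma> [1..<n + 1]))
      = (\<Sum>f\<in>{f \<in> bijections {1..n} A. f (n - 1) = chi0}. \<Prod>s\<in>{1..n}. f s (\<sigma> s))
      + (\<Sum>f\<in>{f \<in> bijections {1..n} A. f n = chi0}. \<Prod>s\<in>{1..n}. f s (\<sigma> s))"
    using coeff_t_psi_nested_comm [OF \<sigma> \<open>2 \<le> n\<close>]
      top_tcoeff_foldr_GAdiff_expansion_map [OF \<open>group G\<close> assms(2) indices(1,2) _ \<sigma>]
      top_tcoeff_foldr_GAdiff_expansion_map [OF \<open>group G\<close> assms(2) indices(3,4) _ \<sigma>]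
    by (simp add: phi_def n_def)
  also have "\<dots> = (\<Sum>f \<in> {f \<in> {1..n} \<rightarrow>\<^sub>E A. bij_betw f {1..n} A \<and> (f (n - 1) = chi0 \<or> f n = chi0)}.
      \<Prod>s\<in>{1..n}. f s (\<sigma> s))"
    using \<open>finite A\<close> \<open>2 \<le> n\<close> by (intro sum_bijections_either_point) auto
  finally show ?thesis
    by (simp add: n_def)
qed

end
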